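(* Let $\kappa>0$ and $\delta_s=\kappa\sqrt s$. For $0\le s\le t<1/\kappa^2$ and $x\in\mathbb R$ define $\phi_{s|t}(x)=\frac{1-\delta_s}{1-\delta_t}x$ if $x\in[\delta_t-1,1-\delta_t]$; $\phi_{s|t}(x)=\sqrt{s/t}\,x-(1-\sqrt{s/t})$ if $x\le\delta_t-1$; $\phi_{s|t}(x)=\sqrt{s/t}\,x+(1-\sqrt{s/t})$ if $x\ge1-\delta_t$. Then for every $t\in(0,1/\kappa^2)$ and $x\in\mathbb R$, the map $s\mapsto x_s:=\phi_{s|t}(x)$ is continuous on $[0,t]$, satisfies $x_t=x$, and solves $\frac{d}{ds}x_s=-\frac12\hat s_{s,\delta_s}(x_s)$ for all $s\in(0,t)$; moreover the trajectory stays in the same region ($x_s\le\delta_s-1$, $x_s\ge1-\delta_s$, or $x_s\in[\delta_s-1,1-\delta_s]$, respectively) for all $s\in(0,t]$. In particular $\phi_{0|t}(x)=x/(1-\delta_t)$ if $x\in[\delta_t-1,1-\delta_t]$ and $\phi_{0|t}(x)=\mathrm{sgn}(x)$ otherwise.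
   Context: Smoothed PL-ESF (training set $\{-1,1\}$), for $\delta\in(0,1)$ and $t>0$: $\hat s_{t,\delta}(x)=-(x+1)/t$ if $x\le\delta-1$; $-(x-1)/t$ if $x\ge1-\delta$; $\frac{\delta}{1-\delta}\cdot\frac xt$ if $x\in(\delta-1,1-\delta)$. *)

theory Defs
  imports "HOL-Analysis.Analysis"
begin

text \<open>Smoothed PL-ESF score for training set {-1,1}, parameters t > 0, delta in (0,1).\<close>
definition shat :: "real \<Rightarrow> real \<Rightarrow> real \<Rightarrow> real" where
  "shat t \<delta> x =
     (if x \<le> \<delta> - 1 then - (x + 1) / t
      else if x \<ge> 1 - \<delta> then - (x - 1) / t
      else (\<delta> / (1 - \<delta>)) * (x / t))"

definition dlt :: "real \<Rightarrow> real \<Rightarrow> real" where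
  "dlt \<kappa> s = \<kappa> * sqrt s"

definition phi :: "real \<Rightarrow> real \<Rightarrow> real \<Rightarrow> real \<Rightarrow> real" where
  "phi \<kappa> s t x =
     (if x \<le> dlt \<kappa> t - 1 then sqrt (s / t) * x - (1 - sqrt (s / t))
      else if x \<ge> 1 - dlt \<kappa> t then sqrt (s / t) * x + (1 - sqrt (s / t))
      else (1 - dlt \<kappa> s) / (1 - dlt \<kappa> t) * x)"

end

theory Submission
  imports Defs
begin

text \<open>Since the branch of \<open>phi \<kappa> s t x\<close> is selected by \<open>x\<close> and \<open>t\<close> alone, \<open>s \<mapsto> phi \<kappa> s t x\<close> is
  one of three explicit curves: \<open>\<plusminus>1 + sqrt (s/t) (x \<mp> 1)\<close> outside the middle region and
  \<open>(1 - \<kappa> sqrt s) x / (1 - \<delta>\<^sub>t)\<close> inside it. As \<open>\<delta>\<^sub>s = sqrt (s/t) \<delta>\<^sub>t\<close>, both the region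
  boundaries and the outer curves scale by \<open>sqrt (s/t)\<close> around \<open>\<plusminus>1\<close>, so trajectories never change
  region, and differentiating each curve reproduces the corresponding branch of the score.\<close>

lemma dlt_lt_1:
  assumes "0 \<le> \<kappa>" "s \<le> t" "t < 1 / \<kappa>\<^sup>2"
  shows "dlt \<kappa> s < 1"
proof -
  have "\<kappa> * sqrt t < 1"
  proof (cases "t \<le> 0")
    case True
    then show ?thesis
      using assms by (smt (verit) mult_nonneg_nonpos real_sqrt_le_0_iff)
  next
    case False
    then have "(\<kappa> * sqrt t)\<^sup>2 < 1"
      using assms by (cases "\<kappa> = 0") (auto simp: power_mult_distrib field_simps)
    then show ?thesis
      by (smt (verit) one_le_power)
  qed
  moreover have "\<kappa> * sqrt s \<le> \<kappa> * sqrt t"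
    using assms by (simp add: mult_left_mono)
  ultimately show ?thesis
    by (simp add: dlt_def)
qed

lemma dlt_scale: "dlt \<kappa> s = sqrt (s / t) * dlt \<kappa> t" if "t \<noteq> 0"
  using that by (simp add: dlt_def real_sqrt_divide)

lemma has_real_derivative_sqrt_ratio_affine:
  assumes "0 < s" "0 < t"
  shows "((\<lambda>s. sqrt (s / t) * a + b) has_real_derivative sqrt (s / t) * a / (2 * s)) (at s)"
proof -
  have "((\<lambda>s. sqrt (s / t) * a + b) has_real_derivative inverse (sqrt (s / t)) / 2 * (1 / t) * a)
          (at s)"
    using assms by (auto intro!: derivative_eq_intros simp: divide_less_0_iff)
  moreover have "inverse (sqrt (s / t)) / 2 * (1 / t) * a = sqrt (s / t) * a / (2 * s)"
    using assms by (simp add: real_sqrt_divide field_simps)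
  ultimately show ?thesis
    by simp
qed

lemma phi_lower: "phi \<kappa> s t x = sqrt (s / t) * (x + 1) - 1" if "x \<le> dlt \<kappa> t - 1"
  using that by (simp add: phi_def algebra_simps)

lemma phi_upper: "phi \<kappa> s t x = sqrt (s / t) * (x - 1) + 1"
  if "dlt \<kappa> t < 1" "1 - dlt \<kappa> t \<le> x"
  using that by (simp add: phi_def algebra_simps)

text \<open>The outer branches agree with the middle formula at the endpoints of the middle region.\<close>

lemma phi_middle:
  assumes "0 < t" "dlt \<kappa> t < 1" "x \<in> {dlt \<kappa> t - 1 .. 1 - dlt \<kappa> t}"
  shows "phi \<kappa> s t x = (1 - dlt \<kappa> s) / (1 - dlt \<kappa> t) * x"
proof -
  have scale: "dlt \<kappa> s = sqrt (s / t) * dlt \<kappa> t"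
    using assms by (simp add: dlt_scale)
  consider "x = dlt \<kappa> t - 1" | "x = 1 - dlt \<kappa> t" | "dlt \<kappa> t - 1 < x" "x < 1 - dlt \<kappa> t"
    using assms by fastforce
  then show ?thesis
  proof cases
    case 1
    then have "phi \<kappa> s t x = dlt \<kappa> s - 1"
      by (simp add: phi_lower scale)
    also have "\<dots> = (1 - dlt \<kappa> s) / (1 - dlt \<kappa> t) * x"
      using assms(2) unfolding 1 by (simp add: field_simps)
    finally show ?thesis .
  next
    case 2
    then have "phi \<kappa> s t x = 1 - dlt \<kappa> s"
      using assms(2) by (simp add: phi_upper scale)
    also have "\<dots> = (1 - dlt \<kappa> s) / (1 - dlt \<kappa> t) * x"
      using assms(2) unfolding 2 by simp
    finally show ?thesis .
  qed (simp add: phi_def)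
qed

lemma continuous_on_phi: "continuous_on S (\<lambda>s. phi \<kappa> s t x)"
proof -
  consider "x \<le> dlt \<kappa> t - 1" | "dlt \<kappa> t - 1 < x" "1 - dlt \<kappa> t \<le> x"
    | "dlt \<kappa> t - 1 < x" "x < 1 - dlt \<kappa> t"
    by linarith
  then show ?thesis
    by cases (simp_all add: phi_def dlt_def divide_inverse continuous_intros)
qed

lemma phi_end: "phi \<kappa> t t x = x" if "t \<noteq> 0"
  using that by (simp add: phi_def)

lemma phi_start:
  assumes "dlt \<kappa> t < 1"
  shows "phi \<kappa> 0 t x = (if x \<in> {dlt \<kappa> t - 1 .. 1 - dlt \<kappa> t} then x / (1 - dlt \<kappa> t) else sgn x)"
  using assms by (auto simp: phi_def dlt_def sgn_if field_simps)

lemma phi_stays_lower: "phi \<kappa> s t x \<le> dlt \<kappa> s - 1"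
  if "0 \<le> s" "0 < t" "x \<le> dlt \<kappa> t - 1"
proof -
  have "sqrt (s / t) * (x + 1) \<le> sqrt (s / t) * dlt \<kappa> t"
    using that by (intro mult_left_mono) auto
  moreover have "dlt \<kappa> s = sqrt (s / t) * dlt \<kappa> t"
    using that by (simp add: dlt_scale)
  ultimately show ?thesis
    using that by (simp add: phi_lower)
qed

lemma phi_stays_upper: "1 - dlt \<kappa> s \<le> phi \<kappa> s t x"
  if "0 \<le> s" "0 < t" "dlt \<kappa> t < 1" "1 - dlt \<kappa> t \<le> x"
proof -
  have "sqrt (s / t) * (1 - x) \<le> sqrt (s / t) * dlt \<kappa> t"
    using that by (intro mult_left_mono) auto
  moreover have "dlt \<kappa> s = sqrt (s / t) * dlt \<kappa> t"
    using that by (simp add: dlt_scale)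
  ultimately show ?thesis
    using that by (simp add: phi_upper algebra_simps)
qed

lemma phi_stays_middle:
  assumes "0 < t" "dlt \<kappa> s < 1" "dlt \<kappa> t < 1" "x \<in> {dlt \<kappa> t - 1 .. 1 - dlt \<kappa> t}"
  shows "phi \<kappa> s t x \<in> {dlt \<kappa> s - 1 .. 1 - dlt \<kappa> s}"
proof -
  have "\<bar>x\<bar> / (1 - dlt \<kappa> t) \<le> 1"
    using assms by auto
  then have "(1 - dlt \<kappa> s) * (\<bar>x\<bar> / (1 - dlt \<kappa> t)) \<le> 1 - dlt \<kappa> s"
    using assms(2) by (intro mult_left_le) auto
  then have "\<bar>phi \<kappa> s t x\<bar> \<le> 1 - dlt \<kappa> s"
    using assms by (simp add: phi_middle abs_mult)
  then show ?thesis
    by auto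
qed

lemma shat_lower: "shat t \<delta> y = - (y + 1) / t" if "y \<le> \<delta> - 1"
  using that by (simp add: shat_def)

lemma shat_upper: "shat t \<delta> y = - (y - 1) / t" if "\<delta> < 1" "1 - \<delta> \<le> y"
  using that by (simp add: shat_def)

lemma shat_middle: "shat t \<delta> y = \<delta> / (1 - \<delta>) * (y / t)" if "\<delta> - 1 < y" "y < 1 - \<delta>"
  using that by (simp add: shat_def)

lemma has_real_derivative_phi_middle:
  assumes "0 < s" "dlt \<kappa> s < 1" "dlt \<kappa> t < 1" "dlt \<kappa> t - 1 < x" "x < 1 - dlt \<kappa> t"
  shows "((\<lambda>s. phi \<kappa> s t x) has_real_derivative - (1/2) * shat s (dlt \<kappa> s) (phi \<kappa> s t x)) (at s)"
proof -
  have phi_eq: "phi \<kappa> s t x = (1 - dlt \<kappa> s) / (1 - dlt \<kappa> t) * x" for s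
    using assms(4,5) by (simp add: phi_def)
  have "\<bar>x\<bar> / (1 - dlt \<kappa> t) < 1"
    using assms(4,5) by auto
  moreover have "\<bar>phi \<kappa> s t x\<bar> = (1 - dlt \<kappa> s) * (\<bar>x\<bar> / (1 - dlt \<kappa> t))"
    using assms(2,3) by (simp add: phi_eq abs_mult)
  ultimately have "\<bar>phi \<kappa> s t x\<bar> < (1 - dlt \<kappa> s) * 1"
    using assms(2) by (metis diff_gt_0_iff_gt mult_strict_left_mono)
  then have "shat s (dlt \<kappa> s) (phi \<kappa> s t x) = dlt \<kappa> s / (1 - dlt \<kappa> s) * (phi \<kappa> s t x / s)"
    by (intro shat_middle) auto
  also have "\<dots> = dlt \<kappa> s * x / ((1 - dlt \<kappa> t) * s)"
    using assms(2) by (simp add: phi_eq)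
  also have "\<dots> = \<kappa> * sqrt s * x / ((1 - dlt \<kappa> t) * (sqrt s * sqrt s))"
    using assms(1) by (simp add: dlt_def)
  also have "\<dots> = \<kappa> * x / ((1 - dlt \<kappa> t) * sqrt s)"
    using assms(1,3) by (simp add: field_simps)
  finally have shat_eq: "shat s (dlt \<kappa> s) (phi \<kappa> s t x) = \<kappa> * x / ((1 - dlt \<kappa> t) * sqrt s)" .
  have "((\<lambda>s. (1 - \<kappa> * sqrt s) / (1 - dlt \<kappa> t) * x) has_real_derivative
      - (\<kappa> * (inverse (sqrt s) / 2)) / (1 - dlt \<kappa> t) * x) (at s)"
    using assms by (auto intro!: derivative_eq_intros)
  moreover have "- (\<kappa> * (inverse (sqrt s) / 2)) / (1 - dlt \<kappa> t) * x
      = - (1/2) * (\<kappa> * x / ((1 - dlt \<kappa> t) * sqrt s))"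
    by (simp add: field_simps inverse_eq_divide)
  ultimately have "((\<lambda>s. phi \<kappa> s t x) has_real_derivative
      - (1/2) * (\<kappa> * x / ((1 - dlt \<kappa> t) * sqrt s))) (at s)"
    unfolding phi_eq dlt_def by (rule DERIV_cong)
  then show ?thesis
    unfolding shat_eq .
qed

lemma phi_has_real_derivative:
  assumes "0 < s" "0 < t" "dlt \<kappa> s < 1" "dlt \<kappa> t < 1"
  shows "((\<lambda>s. phi \<kappa> s t x) has_real_derivative - (1/2) * shat s (dlt \<kappa> s) (phi \<kappa> s t x)) (at s)"
proof -
  consider (lower) "x \<le> dlt \<kappa> t - 1" | (upper) "1 - dlt \<kappa> t \<le> x"
    | (middle) "dlt \<kappa> t - 1 < x" "x < 1 - dlt \<kappa> t"
    by linarith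
  then show ?thesis
  proof cases
    case lower
    have "((\<lambda>s. sqrt (s / t) * (x + 1) + - 1) has_real_derivative sqrt (s / t) * (x + 1) / (2 * s))
            (at s)"
      using assms(1,2) by (rule has_real_derivative_sqrt_ratio_affine)
    moreover have "shat s (dlt \<kappa> s) (phi \<kappa> s t x) = - (phi \<kappa> s t x + 1) / s"
      using assms lower by (intro shat_lower phi_stays_lower) auto
    ultimately show ?thesis
      using lower by (simp add: phi_lower)
  next
    case upper
    have "((\<lambda>s. sqrt (s / t) * (x - 1) + 1) has_real_derivative sqrt (s / t) * (x - 1) / (2 * s))
            (at s)"
      using assms(1,2) by (rule has_real_derivative_sqrt_ratio_affine)
    moreover have "shat s (dlt \<kappa> s) (phi \<kappa> s t x) = - (phi \<kappa> s t x - 1) / s"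
      using assms upper by (intro shat_upper phi_stays_upper) auto
    ultimately show ?thesis
      using assms upper by (simp add: phi_upper)
  next
    case middle
    with assms show ?thesis
      by (intro has_real_derivative_phi_middle)
  qed
qed

theorem mainTheorem5:
  fixes \<kappa> t x :: real
  assumes "\<kappa> > 0" and "0 < t" and "t < 1 / \<kappa>\<^sup>2"
  shows "continuous_on {0..t} (\<lambda>s. phi \<kappa> s t x)
    \<and> phi \<kappa> t t x = x
    \<and> (\<forall>s. 0 < s \<and> s < t \<longrightarrow>
          ((\<lambda>s. phi \<kappa> s t x) has_real_derivative
              (- (1/2) * shat s (dlt \<kappa> s) (phi \<kappa> s t x))) (at s))
    \<and> (x \<le> dlt \<kappa> t - 1 \<longrightarrow> (\<forall>s\<in>{0<..t}. phi \<kappa> s t x \<le> dlt \<kappa> s - 1))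
    \<and> (x \<ge> 1 - dlt \<kappa> t \<longrightarrow> (\<forall>s\<in>{0<..t}. phi \<kappa> s t x \<ge> 1 - dlt \<kappa> s))
    \<and> (x \<in> {dlt \<kappa> t - 1 .. 1 - dlt \<kappa> t} \<longrightarrow>
          (\<forall>s\<in>{0<..t}. phi \<kappa> s t x \<in> {dlt \<kappa> s - 1 .. 1 - dlt \<kappa> s}))
    \<and> phi \<kappa> 0 t x = (if x \<in> {dlt \<kappa> t - 1 .. 1 - dlt \<kappa> t}
                       then x / (1 - dlt \<kappa> t) else sgn x)"
proof -
  have dlt_less_1: "dlt \<kappa> s < 1" if "s \<le> t" for s
    using assms that by (intro dlt_lt_1) auto
  note dlt_t_less_1 = dlt_less_1[OF order_refl]
  show ?thesis
  proof (intro conjI allI impI ballI)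
    show "continuous_on {0..t} (\<lambda>s. phi \<kappa> s t x)"
      by (rule continuous_on_phi)
    show "phi \<kappa> t t x = x"
      using assms(2) by (intro phi_end) simp
    show "((\<lambda>s. phi \<kappa> s t x) has_real_derivative - (1/2) * shat s (dlt \<kappa> s) (phi \<kappa> s t x)) (at s)"
      if "0 < s \<and> s < t" for s
      using assms that by (intro phi_has_real_derivative dlt_less_1) auto
    show "phi \<kappa> s t x \<in> {dlt \<kappa> s - 1 .. 1 - dlt \<kappa> s}"
      if "x \<in> {dlt \<kappa> t - 1 .. 1 - dlt \<kappa> t}" "s \<in> {0<..t}" for s
      using assms that by (intro phi_stays_middle dlt_less_1) auto
    show "phi \<kappa> 0 t x = (if x \<in> {dlt \<kappa> t - 1 .. 1 - dlt \<kappa> t} then x / (1 - dlt \<kappa> t) else sgn x)"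
      using dlt_t_less_1 by (rule phi_start)
    show "phi \<kappa> s t x \<le> dlt \<kappa> s - 1" if "x \<le> dlt \<kappa> t - 1" "s \<in> {0<..t}" for s
      using assms that by (intro phi_stays_lower) auto
    show "1 - dlt \<kappa> s \<le> phi \<kappa> s t x" if "1 - dlt \<kappa> t \<le> x" "s \<in> {0<..t}" for s
      using assms that dlt_t_less_1 by (intro phi_stays_upper) auto
  qed
qed

end
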